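(* Let $M$ be a finite set of item types and let $\mathcal{D}=(p_j)_{j\in M}$ be a probability distribution on $M$. There are $n$ agents with valuations $w_i:\mathbb{Z}_+^{M}\to\mathbb{R}_+$ (functions of multisets of items) that are monotone and have the property of diminishing returns. Suppose $m$ items arrive, each drawn independently from $\mathcal{D}$, and let $OPT=\mathbb{E}[OPT(\mathcal{M})]$, where $OPT(\mathcal{M})$ is the maximum of $\sum_i w_i(S_i)$ over partitions of the realized arrival multiset $\mathcal{M}$ into multisets $S_1,\dots,S_n$. Consider the greedy algorithm: if the multisets assigned so far are $(T_1,\dots,T_n)$ when item $j$ arrives, it assigns $j$ to an agent $i$ maximizing $w_i(T_i+j)-w_i(T_i)$. Then the expected welfare of the greedy algorithm is at least $(1-1/e)\,OPT$.
   Context: Multisets over $M$ are identified with vectors in $\mathbb{Z}_+^M$. $T+j$ denotes the multiset $T$ with one extra copy of $j$, and $T+S$ denotes the sum of multiplicities. A function $f:\mathbb{Z}_+^M\to\mathbb{R}$ has the property of diminishing returns if for all $x\le y$ (coordinatewise) and every unit vector $e_j$ one has $f(x+e_j)-f(x)\ge f(y+e_j)-f(y)$. It is monotone if $f(x)\le f(y)$ whenever $x\le y$. *)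

theory Defs
  imports Complex_Main
begin

text \<open>Multisets over the finite item type 'm are vectors 'm \<Rightarrow> nat (i.e. elements of Z_+^M),
  ordered coordinatewise.  T + j adds one copy of j.\<close>

definition add_item :: "('m \<Rightarrow> nat) \<Rightarrow> 'm \<Rightarrow> ('m \<Rightarrow> nat)" where
  "add_item T j = T(j := Suc (T j))"

definition monotone_val :: "(('m \<Rightarrow> nat) \<Rightarrow> real) \<Rightarrow> bool" where
  "monotone_val f \<longleftrightarrow> (\<forall>x y. x \<le> y \<longrightarrow> f x \<le> f y)"

definition diminishing_returns :: "(('m \<Rightarrow> nat) \<Rightarrow> real) \<Rightarrow> bool" where
  "diminishing_returns f \<longleftrightarrow>
     (\<forall>x y j. x \<le> y \<longrightarrow> f (add_item x j) - f x \<ge> f (add_item y j) - f y)"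

definition mset_of :: "'m list \<Rightarrow> ('m \<Rightarrow> nat)" where
  "mset_of xs = (\<lambda>j. count_list xs j)"

definition OPT_of :: "(nat \<Rightarrow> ('m \<Rightarrow> nat) \<Rightarrow> real) \<Rightarrow> nat \<Rightarrow> ('m \<Rightarrow> nat) \<Rightarrow> real" where
  "OPT_of w n X = Max {(\<Sum>i<n. w i (S i)) | S. (\<forall>j. (\<Sum>i<n. S i j) = X j)}"

text \<open>Greedy allocation after the first k items of xs; the agent receiving item x after
  history h (the previously arrived items) is ch h x (tie-breaking rule).\<close>
primrec greedy_alloc ::
  "('m list \<Rightarrow> 'm \<Rightarrow> nat) \<Rightarrow> 'm list \<Rightarrow> nat \<Rightarrow> (nat \<Rightarrow> 'm \<Rightarrow> nat)" where
  "greedy_alloc ch xs 0 = (\<lambda>i. (\<lambda>j. 0))"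
| "greedy_alloc ch xs (Suc k) =
     (let T = greedy_alloc ch xs k; x = xs ! k; i = ch (take k xs) x
      in T(i := add_item (T i) x))"

definition greedy_final :: "('m list \<Rightarrow> 'm \<Rightarrow> nat) \<Rightarrow> 'm list \<Rightarrow> (nat \<Rightarrow> 'm \<Rightarrow> nat)" where
  "greedy_final ch xs = greedy_alloc ch xs (length xs)"

definition is_greedy_rule ::
  "(nat \<Rightarrow> ('m \<Rightarrow> nat) \<Rightarrow> real) \<Rightarrow> nat \<Rightarrow> ('m list \<Rightarrow> 'm \<Rightarrow> nat) \<Rightarrow> bool" where
  "is_greedy_rule w n ch \<longleftrightarrow>
     (\<forall>h x. let T = greedy_final ch h in
        ch h x < n \<and>
        (\<forall>i<n. w i (add_item (T i) x) - w i (T i)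
               \<le> w (ch h x) (add_item (T (ch h x)) x) - w (ch h x) (T (ch h x))))"

definition expect_iid :: "('m::finite \<Rightarrow> real) \<Rightarrow> nat \<Rightarrow> ('m list \<Rightarrow> real) \<Rightarrow> real" where
  "expect_iid p m f = (\<Sum>xs\<in>{xs. length xs = m}. prod_list (map p xs) * f xs)"

end

theory Submission
  imports Defs "HOL-Library.FuncSet"
begin

(* Write G(h) for the greedy welfare after the item history h and g(t) for its
   expectation after t arrivals.  Fix a history h with greedy bundles T_i.  By
   monotonicity and diminishing returns, any bundle S_i is worth at most
   w_i(T_i) plus the sum over the items of S_i of their marginal values at T_i,
   and each such marginal value is at most the gain the greedy rule would realise
   for that item after h.  Summing over any partition of the m random items gives
     E[OPT] <= G(h) + m * (expected greedy gain of the next item after h),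
   and averaging over h of length t yields E[OPT] <= g(t) + m (g(t+1) - g(t)).
   Solving this recurrence with g(0) >= 0 gives g(m) >= (1 - (1-1/m)^m) E[OPT]
   >= (1 - 1/e) E[OPT]. *)

section \<open>Expectation over i.i.d. sequences\<close>

lemma lists_length_Suc_eq:
  "{xs :: 'a list. length xs = Suc k} = (\<lambda>(x, ys). x # ys) ` (UNIV \<times> {ys. length ys = k})"
  by (auto simp: length_Suc_conv)

lemma expect_iid_Suc:
  "expect_iid p (Suc k) f = (\<Sum>x\<in>UNIV. p x * expect_iid p k (\<lambda>ys. f (x # ys)))"
proof -
  have inj: "inj_on (\<lambda>(x, ys). x # ys) (UNIV \<times> {ys :: 'a list. length ys = k})"
    by (auto simp: inj_on_def)
  have "expect_iid p (Suc k) f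
      = (\<Sum>(x, ys)\<in>UNIV \<times> {ys. length ys = k}. prod_list (map p (x # ys)) * f (x # ys))"
    unfolding expect_iid_def lists_length_Suc_eq
    by (subst sum.reindex[OF inj]) (simp add: case_prod_unfold)
  also have "\<dots> = (\<Sum>x\<in>UNIV. \<Sum>ys | length ys = k. p x * (prod_list (map p ys) * f (x # ys)))"
    by (subst sum.cartesian_product[symmetric]) (simp add: mult.assoc)
  finally show ?thesis
    unfolding expect_iid_def by (simp add: sum_distrib_left)
qed

lemma expect_iid_0: "expect_iid p 0 f = f []"
  unfolding expect_iid_def by simp

lemma expect_iid_const:
  assumes "(\<Sum>j\<in>UNIV. p j) = 1"
  shows "expect_iid p k (\<lambda>_. c) = c"
  by (induction k) (simp_all add: expect_iid_0 expect_iid_Suc assms flip: sum_distrib_right)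

lemma expect_iid_add: "expect_iid p k (\<lambda>xs. f xs + g xs) = expect_iid p k f + expect_iid p k g"
  unfolding expect_iid_def by (simp add: distrib_left sum.distrib)

lemma expect_iid_cmult: "expect_iid p k (\<lambda>xs. c * f xs) = c * expect_iid p k f"
  unfolding expect_iid_def by (simp add: sum_distrib_left mult.left_commute)

lemma expect_iid_mono:
  assumes "\<And>j. p j \<ge> 0" and "\<And>xs. length xs = k \<Longrightarrow> f xs \<le> g xs"
  shows "expect_iid p k f \<le> expect_iid p k g"
  unfolding expect_iid_def
  using assms by (intro sum_mono mult_left_mono prod_list_nonneg) auto

lemma expect_iid_Suc_last:
  "expect_iid p (Suc k) f = expect_iid p k (\<lambda>h. \<Sum>x\<in>UNIV. p x * f (h @ [x]))"
proof (induction k arbitrary: f)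
  case 0
  show ?case by (simp add: expect_iid_Suc expect_iid_0)
next
  case (Suc k)
  have "expect_iid p (Suc (Suc k)) f = (\<Sum>x\<in>UNIV. p x * expect_iid p (Suc k) (\<lambda>ys. f (x # ys)))"
    by (rule expect_iid_Suc)
  also have "\<dots> = (\<Sum>x\<in>UNIV. p x * expect_iid p k (\<lambda>h. \<Sum>y\<in>UNIV. p y * f (x # h @ [y])))"
    by (simp only: Suc.IH append_Cons)
  also have "\<dots> = expect_iid p (Suc k) (\<lambda>h. \<Sum>y\<in>UNIV. p y * f (h @ [y]))"
    by (simp add: expect_iid_Suc)
  finally show ?case .
qed

lemma expect_iid_sum_list:
  assumes "(\<Sum>j\<in>UNIV. p j) = 1"
  shows "expect_iid p k (\<lambda>ys. sum_list (map D ys)) = real k * (\<Sum>x\<in>UNIV. p x * D x)"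
proof (induction k)
  case (Suc k)
  have "expect_iid p (Suc k) (\<lambda>ys. sum_list (map D ys))
      = (\<Sum>x\<in>UNIV. p x * D x) + (\<Sum>x\<in>UNIV. p x) * (real k * (\<Sum>x\<in>UNIV. p x * D x))"
    by (simp add: expect_iid_Suc expect_iid_add expect_iid_const[OF assms] Suc
        distrib_left sum.distrib sum_distrib_right)
  then show ?case using assms by (simp add: algebra_simps)
qed (simp add: expect_iid_0)

section \<open>Diminishing returns\<close>

definition marginal :: "(('m \<Rightarrow> nat) \<Rightarrow> real) \<Rightarrow> ('m \<Rightarrow> nat) \<Rightarrow> 'm \<Rightarrow> real" where
  "marginal f T j = f (add_item T j) - f T"

lemma sum_add_item:
  fixes U :: "'m::finite \<Rightarrow> nat"
  shows "(\<Sum>j\<in>UNIV. add_item U j0 j) = Suc (\<Sum>j\<in>UNIV. U j)"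
proof -
  have "(\<Sum>j\<in>UNIV. add_item U j0 j) = (\<Sum>j\<in>UNIV. U j + (if j = j0 then 1 else 0))"
    by (rule sum.cong) (auto simp: add_item_def)
  then show ?thesis by (simp add: sum.distrib)
qed

lemma weighted_sum_add_item:
  fixes U :: "'m::finite \<Rightarrow> nat"
  shows "(\<Sum>j\<in>UNIV. real (add_item U j0 j) * c j) = (\<Sum>j\<in>UNIV. real (U j) * c j) + c j0"
proof -
  have "(\<Sum>j\<in>UNIV. real (add_item U j0 j) * c j)
      = (\<Sum>j\<in>UNIV. real (U j) * c j + (if j = j0 then c j else 0))"
    by (rule sum.cong) (auto simp: add_item_def distrib_right)
  then show ?thesis by (simp add: sum.distrib)
qed

lemma add_item_induct [case_names empty add]:
  fixes U :: "'m::finite \<Rightarrow> nat"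
  assumes empty: "P (\<lambda>_. 0)" and add: "\<And>U j. P U \<Longrightarrow> P (add_item U j)"
  shows "P U"
proof -
  have "P U" if "(\<Sum>j\<in>UNIV. U j) = N" for N and U :: "'m \<Rightarrow> nat"
    using that
  proof (induction N arbitrary: U)
    case 0
    then have "U = (\<lambda>_. 0)" by (simp add: fun_eq_iff)
    then show ?case using empty by simp
  next
    case (Suc N)
    then obtain j0 where "U j0 > 0"
      by (metis Zero_not_Suc gr0I sum.neutral)
    define U' where "U' = U(j0 := U j0 - 1)"
    have U: "U = add_item U' j0"
      using \<open>U j0 > 0\<close> unfolding U'_def add_item_def by auto
    have "(\<Sum>j\<in>UNIV. U' j) = N"
      using Suc.prems unfolding U sum_add_item by simp
    then show ?case unfolding U by (intro add Suc.IH)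
  qed
  then show ?thesis by blast
qed

lemma diminishing_returns_bound:
  fixes f :: "('m::finite \<Rightarrow> nat) \<Rightarrow> real"
  assumes dr: "diminishing_returns f"
  shows "f (\<lambda>j. T j + U j) \<le> f T + (\<Sum>j\<in>UNIV. real (U j) * marginal f T j)"
proof (induction U rule: add_item_induct)
  case empty
  then show ?case by simp
next
  case (add U j)
  have sum_eq: "(\<lambda>k. T k + add_item U j k) = add_item (\<lambda>k. T k + U k) j"
    by (auto simp: add_item_def fun_eq_iff)
  have "T \<le> (\<lambda>k. T k + U k)" by (simp add: le_fun_def)
  then have "marginal f (\<lambda>k. T k + U k) j \<le> marginal f T j"
    using dr unfolding diminishing_returns_def marginal_def by blast
  then show ?case
    using add.IH unfolding sum_eq weighted_sum_add_item by (simp add: marginal_def)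
qed

lemma bundle_value_bound:
  fixes f :: "('m::finite \<Rightarrow> nat) \<Rightarrow> real"
  assumes mono: "monotone_val f" and dr: "diminishing_returns f"
    and marg: "\<And>j. marginal f T j \<le> D j"
  shows "f S \<le> f T + (\<Sum>j\<in>UNIV. real (S j) * D j)"
proof -
  have "f S \<le> f (\<lambda>j. T j + S j)"
    using mono unfolding monotone_val_def by (simp add: le_fun_def)
  also have "\<dots> \<le> f T + (\<Sum>j\<in>UNIV. real (S j) * marginal f T j)"
    by (rule diminishing_returns_bound[OF dr])
  also have "\<dots> \<le> f T + (\<Sum>j\<in>UNIV. real (S j) * D j)"
    by (intro add_left_mono sum_mono mult_left_mono marg) auto
  finally show ?thesis .
qed

section \<open>Bounding the offline optimum\<close>

lemma sum_list_map_eq_count_sum: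
  fixes D :: "'m::finite \<Rightarrow> real"
  shows "sum_list (map D ys) = (\<Sum>j\<in>UNIV. real (count_list ys j) * D j)"
proof (induction ys)
  case (Cons y ys)
  have "(\<Sum>j\<in>UNIV. real (count_list (y # ys) j) * D j)
      = (\<Sum>j\<in>UNIV. real (count_list ys j) * D j + (if j = y then D j else 0))"
    by (rule sum.cong) (auto simp: distrib_right)
  then show ?case using Cons.IH by (simp add: sum.distrib)
qed simp

text \<open>OPT_of is a maximum over the finitely many partitions of X, which exist as
  soon as there is at least one agent.\<close>
lemma OPT_of_le:
  fixes X :: "'m::finite \<Rightarrow> nat"
  assumes n: "n > 0"
    and bound: "\<And>S. (\<forall>j. (\<Sum>i<n. S i j) = X j) \<Longrightarrow> (\<Sum>i<n. w i (S i)) \<le> B"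
  shows "OPT_of w n X \<le> B"
proof -
  let ?A = "{(\<Sum>i<n. w i (S i)) | S. \<forall>j. (\<Sum>i<n. S i j) = X j}"
  let ?bundles = "PiE {..<n} (\<lambda>_. PiE UNIV (\<lambda>j. {0..X j}))"
  have "?A \<subseteq> (\<lambda>S. \<Sum>i<n. w i (S i)) ` ?bundles"
  proof
    fix a assume "a \<in> ?A"
    then obtain S where a: "a = (\<Sum>i<n. w i (S i))" and S: "\<forall>j. (\<Sum>i<n. S i j) = X j"
      by blast
    have "S i j \<le> X j" if "i < n" for i j
      using member_le_sum[of i "{..<n}" "\<lambda>i. S i j"] that S by auto
    then have "restrict S {..<n} \<in> ?bundles" by auto
    moreover have "a = (\<Sum>i<n. w i (restrict S {..<n} i))" unfolding a by simp
    ultimately show "a \<in> (\<lambda>S. \<Sum>i<n. w i (S i)) ` ?bundles" by blast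
  qed
  then have "finite ?A"
    by (rule finite_subset) (intro finite_imageI finite_PiE; simp)
  moreover have "(\<Sum>i<n. w i (\<lambda>j. if i = 0 then X j else 0)) \<in> ?A"
    using n by auto
  then have "?A \<noteq> {}" by blast
  ultimately show ?thesis
    unfolding OPT_of_def using bound by (intro Max.boundedI) auto
qed

lemma OPT_of_marginal_bound:
  fixes w :: "nat \<Rightarrow> ('m::finite \<Rightarrow> nat) \<Rightarrow> real" and T :: "nat \<Rightarrow> 'm \<Rightarrow> nat"
  assumes n: "n > 0"
    and mono: "\<And>i. i < n \<Longrightarrow> monotone_val (w i)"
    and dr: "\<And>i. i < n \<Longrightarrow> diminishing_returns (w i)"
    and marg: "\<And>i j. i < n \<Longrightarrow> marginal (w i) (T i) j \<le> D j"
  shows "OPT_of w n (mset_of ys) \<le> (\<Sum>i<n. w i (T i)) + sum_list (map D ys)"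
proof (rule OPT_of_le[OF n])
  fix S assume S: "\<forall>j. (\<Sum>i<n. S i j) = mset_of ys j"
  have "(\<Sum>i<n. w i (S i)) \<le> (\<Sum>i<n. w i (T i) + (\<Sum>j\<in>UNIV. real (S i j) * D j))"
    by (intro sum_mono bundle_value_bound mono dr marg) simp_all
  also have "\<dots> = (\<Sum>i<n. w i (T i)) + (\<Sum>j\<in>UNIV. real (\<Sum>i<n. S i j) * D j)"
    by (simp add: sum.distrib sum_distrib_right sum.swap[of _ "{..<n}"])
  also have "\<dots> = (\<Sum>i<n. w i (T i)) + sum_list (map D ys)"
    using S by (simp add: mset_of_def sum_list_map_eq_count_sum)
  finally show "(\<Sum>i<n. w i (S i)) \<le> (\<Sum>i<n. w i (T i)) + sum_list (map D ys)" .
qed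

section \<open>The greedy allocation\<close>

definition greedy_welfare ::
  "(nat \<Rightarrow> ('m \<Rightarrow> nat) \<Rightarrow> real) \<Rightarrow> nat \<Rightarrow> ('m list \<Rightarrow> 'm \<Rightarrow> nat) \<Rightarrow> 'm list \<Rightarrow> real" where
  "greedy_welfare w n ch h = (\<Sum>i<n. w i (greedy_final ch h i))"

definition greedy_gain ::
  "(nat \<Rightarrow> ('m \<Rightarrow> nat) \<Rightarrow> real) \<Rightarrow> ('m list \<Rightarrow> 'm \<Rightarrow> nat) \<Rightarrow> 'm list \<Rightarrow> 'm \<Rightarrow> real" where
  "greedy_gain w ch h x = marginal (w (ch h x)) (greedy_final ch h (ch h x)) x"

lemma greedy_alloc_append:
  "k \<le> length xs \<Longrightarrow> greedy_alloc ch (xs @ ys) k = greedy_alloc ch xs k"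
  by (induction k) (simp_all add: Let_def nth_append)

lemma greedy_final_snoc:
  "greedy_final ch (h @ [x]) = (greedy_final ch h)(ch h x := add_item (greedy_final ch h (ch h x)) x)"
  unfolding greedy_final_def using greedy_alloc_append[of "length h" h ch "[x]"]
  by (simp add: Let_def)

lemma greedy_rule_agent: "is_greedy_rule w n ch \<Longrightarrow> ch h x < n"
  unfolding is_greedy_rule_def by (meson)

lemma greedy_gain_maximal:
  "is_greedy_rule w n ch \<Longrightarrow> i < n \<Longrightarrow> marginal (w i) (greedy_final ch h i) x \<le> greedy_gain w ch h x"
  unfolding is_greedy_rule_def greedy_gain_def marginal_def Let_def by blast

lemma greedy_welfare_snoc:
  assumes "ch h x < n"
  shows "greedy_welfare w n ch (h @ [x]) = greedy_welfare w n ch h + greedy_gain w ch h x"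
proof -
  let ?T = "greedy_final ch h" and ?c = "ch h x"
  have "greedy_welfare w n ch (h @ [x])
      = (\<Sum>i<n. w i (?T i) + (if i = ?c then greedy_gain w ch h x else 0))"
    unfolding greedy_welfare_def greedy_final_snoc greedy_gain_def marginal_def
    by (rule sum.cong) auto
  then show ?thesis
    using assms by (simp add: sum.distrib greedy_welfare_def)
qed

lemma expected_greedy_welfare_Suc:
  assumes greedy: "is_greedy_rule w n ch" and p_sum: "(\<Sum>j\<in>UNIV. p j) = 1"
  shows "expect_iid p (Suc t) (greedy_welfare w n ch)
       = expect_iid p t (greedy_welfare w n ch)
         + expect_iid p t (\<lambda>h. \<Sum>x\<in>UNIV. p x * greedy_gain w ch h x)"
proof -
  have "(\<Sum>x\<in>UNIV. p x * greedy_welfare w n ch (h @ [x]))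
      = greedy_welfare w n ch h + (\<Sum>x\<in>UNIV. p x * greedy_gain w ch h x)" for h
    by (simp add: greedy_welfare_snoc[where ch = ch and h = h, OF greedy_rule_agent[OF greedy]] distrib_left
        sum.distrib p_sum flip: sum_distrib_right)
  then show ?thesis
    by (simp add: expect_iid_Suc_last expect_iid_add)
qed

lemma expected_OPT_le_greedy_progress:
  assumes p_nonneg: "\<And>j. p j \<ge> 0" and p_sum: "(\<Sum>j\<in>UNIV. p j) = 1"
    and mono: "\<And>i. i < n \<Longrightarrow> monotone_val (w i)"
    and dr: "\<And>i. i < n \<Longrightarrow> diminishing_returns (w i)"
    and greedy: "is_greedy_rule w n ch"
  shows "expect_iid p m (\<lambda>xs. OPT_of w n (mset_of xs))
       \<le> greedy_welfare w n ch h + real m * (\<Sum>x\<in>UNIV. p x * greedy_gain w ch h x)"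
proof -
  have n: "n > 0" using greedy_rule_agent[OF greedy] by fastforce
  have "expect_iid p m (\<lambda>xs. OPT_of w n (mset_of xs))
      \<le> expect_iid p m (\<lambda>ys. greedy_welfare w n ch h + sum_list (map (greedy_gain w ch h) ys))"
    unfolding greedy_welfare_def
    by (intro expect_iid_mono p_nonneg OPT_of_marginal_bound[OF n mono dr]
        greedy_gain_maximal[OF greedy])
  also have "\<dots> = greedy_welfare w n ch h + real m * (\<Sum>x\<in>UNIV. p x * greedy_gain w ch h x)"
    by (simp add: expect_iid_add expect_iid_const[OF p_sum] expect_iid_sum_list[OF p_sum])
  finally show ?thesis .
qed

section \<open>Solving the recurrence\<close>

text \<open>A nonnegative sequence that closes a 1/m fraction of its gap to B in every step
  reaches (1 - 1/e) B after m steps.\<close>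
lemma recurrence_one_minus_inv_e:
  fixes g :: "nat \<Rightarrow> real"
  assumes step: "\<And>t. B \<le> g t + real m * (g (Suc t) - g t)"
    and g0: "0 \<le> g 0" and gm: "0 \<le> g m"
  shows "(1 - exp (-1)) * B \<le> g m"
proof (cases "B \<ge> 0")
  case False
  then have "(1 - exp (-1)) * B \<le> 0" by (intro mult_nonneg_nonpos) simp_all
  then show ?thesis using gm by linarith
next
  case B: True
  show ?thesis
  proof (cases "m = 0")
    case True
    then have "B \<le> g m" using step[of 0] by simp
    moreover have "(1 - exp (-1)) * B \<le> B" using B by (simp add: mult_left_le_one_le)
    ultimately show ?thesis by linarith
  next
    case False
    define r where "r = 1 - 1 / real m"
    have r: "0 \<le> r" using False by (simp add: r_def)
    have gap: "B - g t \<le> r ^ t * (B - g 0)" for t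
    proof (induction t)
      case (Suc t)
      have "B - g (Suc t) \<le> r * (B - g t)"
        using step[of t] False by (simp add: r_def field_simps)
      also have "\<dots> \<le> r * (r ^ t * (B - g 0))" by (rule mult_left_mono[OF Suc r])
      finally show ?case by simp
    qed simp
    have "r ^ m * (B - g 0) \<le> r ^ m * B"
      using g0 r by (simp add: mult_left_mono)
    also have "\<dots> \<le> exp (-1) * B"
      using exp_ge_one_minus_x_over_n_power_n[of 1 m] False B
      by (intro mult_right_mono) (simp_all add: r_def)
    finally show ?thesis using gap[of m] by (simp add: algebra_simps)
  qed
qed

theorem theorem4p3:
  fixes p :: "'m::finite \<Rightarrow> real"
    and w :: "nat \<Rightarrow> ('m \<Rightarrow> nat) \<Rightarrow> real"
    and n m :: nat
    and ch :: "'m list \<Rightarrow> 'm \<Rightarrow> nat"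
  assumes p_nonneg: "\<And>j. p j \<ge> 0"
    and p_sum: "(\<Sum>j\<in>UNIV. p j) = 1"
    and w_nonneg: "\<And>i x. i < n \<Longrightarrow> w i x \<ge> 0"
    and w_mono: "\<And>i. i < n \<Longrightarrow> monotone_val (w i)"
    and w_dr: "\<And>i. i < n \<Longrightarrow> diminishing_returns (w i)"
    and greedy: "is_greedy_rule w n ch"
  shows "expect_iid p m (\<lambda>xs. \<Sum>i<n. w i (greedy_final ch xs i))
           \<ge> (1 - exp (-1)) * expect_iid p m (\<lambda>xs. OPT_of w n (mset_of xs))"
proof -
  define OPT where "OPT = expect_iid p m (\<lambda>xs. OPT_of w n (mset_of xs))"
  define g where "g t = expect_iid p t (greedy_welfare w n ch)" for t
  have welfare_nonneg: "0 \<le> g t" for t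
  proof -
    have "0 \<le> expect_iid p t (\<lambda>_. 0)" by (simp add: expect_iid_const[OF p_sum])
    also have "\<dots> \<le> g t"
      unfolding g_def greedy_welfare_def by (intro expect_iid_mono p_nonneg sum_nonneg w_nonneg) simp
    finally show ?thesis .
  qed
  have "OPT \<le> g t + real m * (g (Suc t) - g t)" for t
  proof -
    have "OPT = expect_iid p t (\<lambda>_. OPT)" by (simp add: expect_iid_const[OF p_sum])
    also have "\<dots> \<le> expect_iid p t
        (\<lambda>h. greedy_welfare w n ch h + real m * (\<Sum>x\<in>UNIV. p x * greedy_gain w ch h x))"
      unfolding OPT_def
      by (intro expect_iid_mono p_nonneg expected_OPT_le_greedy_progress w_mono w_dr greedy p_sum)
    also have "\<dots> = g t + real m * (g (Suc t) - g t)"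
      by (simp add: g_def expect_iid_add expect_iid_cmult expected_greedy_welfare_Suc[OF greedy p_sum])
    finally show ?thesis .
  qed
  then have "(1 - exp (-1)) * OPT \<le> g m"
    by (rule recurrence_one_minus_inv_e) (rule welfare_nonneg)+
  then show ?thesis unfolding OPT_def g_def greedy_welfare_def .
qed

end
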